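(* Let $M'\subset\bigoplus_{i=1}^rS[-\delta_i]$ be a graded $S$-submodule which is generated by $\bigoplus_{d\ge0}M'(d)_d$, where $M'(d)=M'\cap\bigoplus_iS(\delta_i,d)[-\delta_i]$. Then there exists a unique graded right $A$-submodule $M\subset\bigoplus_iA[-\delta_i]$ such that $M'=L(M)$.
   Context: Let $\mathbb K$ be a field, $F=\mathbb K\langle x_1,\dots,x_n\rangle$ with standard grading, $I\subset F$ a graded two-sided ideal, $A=F/I$, $A[-\delta]_d=A_{d-\delta}$, $\bigoplus_{i=1}^rA[-\delta_i]$ the graded free right $A$-module with basis $e_i$ of degree $\delta_i$. Let $P=\mathbb K[x_{ij}\mid1\le i\le n,j\ge1]$ (commutative, $\deg x_{ij}=1$), $Q$ the ideal generated by all $x_{ij}x_{kj}$, $R=P/Q$, $\sigma:x_{ij}\mapsto x_{i,j+1}$, $\iota:F\to R$ the $\mathbb K$-linear map $x_{i_1}\cdots x_{i_d}\mapsto x_{i_11}\cdots x_{i_dd}$, $J$ the ideal of $R$ generated by $\bigcup_{k\ge0}\sigma^k(\iota(I))$, $S=R/J$ (with induced $\sigma$ and induced injective graded linear $\iota:A\to S$). $S(\delta,d)$ is the subalgebra of $S$ generated by the cosets of $x_{ij}$ with $\delta<j\le d$; $\bigoplus_iS(\delta_i,d)[-\delta_i]$ means the elements $\sum_ie'_ih_i$ with $h_i\in S(\delta_i,d)$. $\bigoplus_iS[-\delta_i]$ is the graded free $S$-module with basis $e'_i$ of degree $\delta_i$, and $\iota:\bigoplus_iA[-\delta_i]\to\bigoplus_iS[-\delta_i]$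 is $e_if\mapsto e'_i\sigma^{\delta_i}(\iota(f))$. $L(M)$ is the $S$-submodule generated by $\iota(M)$. *)

theory Defs
  imports Main "HOL-Library.Poly_Mapping"
begin

text \<open>Elements of F are finitely supported functions from words (lists of letter
indices; letter i stands for x_{i+1}) to the field.\<close>

type_synonym 'k ncpoly = "nat list \<Rightarrow>\<^sub>0 'k"

definition ncF :: "nat \<Rightarrow> 'k::field ncpoly set" where
  "ncF n = {f. \<forall>w\<in>Poly_Mapping.keys f. set w \<subseteq> {..<n}}"

definition ncmul :: "'k::field ncpoly \<Rightarrow> 'k ncpoly \<Rightarrow> 'k ncpoly" where
  "ncmul f g = (\<Sum>u\<in>Poly_Mapping.keys f. \<Sum>v\<in>Poly_Mapping.keys g. Poly_Mapping.single (u @ v) (Poly_Mapping.lookup f u * Poly_Mapping.lookup g v))"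

definition hcF :: "nat \<Rightarrow> 'k::field ncpoly \<Rightarrow> 'k ncpoly" where
  "hcF d f = (\<Sum>w\<in>{w\<in>Poly_Mapping.keys f. length w = d}. Poly_Mapping.single w (Poly_Mapping.lookup f w))"

definition graded_tsideal :: "nat \<Rightarrow> 'k::field ncpoly set \<Rightarrow> bool" where
  "graded_tsideal n I \<longleftrightarrow> I \<subseteq> ncF n \<and> 0 \<in> I \<and>
     (\<forall>f\<in>I. \<forall>g\<in>I. f + g \<in> I) \<and>
     (\<forall>f\<in>I. \<forall>a\<in>ncF n. \<forall>b\<in>ncF n. ncmul a (ncmul f b) \<in> I) \<and>
     (\<forall>f\<in>I. \<forall>d. hcF d f \<in> I)"

text \<open>A graded right A-submodule of
(+)_{i<r} A[-delta_i] is encoded by its preimage in (+)_{i<r} F[-delta_i], i.e.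
a graded right F-submodule containing (+)_i e_i I.\<close>

definition ncfree :: "nat \<Rightarrow> nat \<Rightarrow> (nat \<Rightarrow> 'k::field ncpoly) set" where
  "ncfree n r = {x. (\<forall>i<r. x i \<in> ncF n) \<and> (\<forall>i\<ge>r. x i = 0)}"

definition Ifree :: "nat \<Rightarrow> 'k::field ncpoly set \<Rightarrow> (nat \<Rightarrow> 'k ncpoly) set" where
  "Ifree r I = {x. (\<forall>i<r. x i \<in> I) \<and> (\<forall>i\<ge>r. x i = 0)}"

text \<open>degree-d homogeneous component in (+)_i F[-delta_i] (e_i has degree delta_i)\<close>
definition hcFM :: "(nat \<Rightarrow> nat) \<Rightarrow> nat \<Rightarrow> (nat \<Rightarrow> 'k::field ncpoly) \<Rightarrow> nat \<Rightarrow> 'k ncpoly" where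
  "hcFM \<delta> d x = (\<lambda>i. if \<delta> i \<le> d then hcF (d - \<delta> i) (x i) else 0)"

definition graded_right_submodule ::
  "nat \<Rightarrow> 'k::field ncpoly set \<Rightarrow> nat \<Rightarrow> (nat \<Rightarrow> nat) \<Rightarrow> (nat \<Rightarrow> 'k ncpoly) set \<Rightarrow> bool" where
  "graded_right_submodule n I r \<delta> M \<longleftrightarrow>
     M \<subseteq> ncfree n r \<and> Ifree r I \<subseteq> M \<and>
     (\<forall>x\<in>M. \<forall>y\<in>M. (\<lambda>i. x i + y i) \<in> M) \<and>
     (\<forall>x\<in>M. \<forall>g\<in>ncF n. (\<lambda>i. ncmul (x i) g) \<in> M) \<and>
     (\<forall>x\<in>M. \<forall>d. hcFM \<delta> d x \<in> M)"

type_synonym pmon = "(nat \<times> nat) \<Rightarrow>\<^sub>0 nat"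
type_synonym 'k cpoly = "pmon \<Rightarrow>\<^sub>0 'k"

text \<open>variable (i,j) stands for x_{i+1,j}; columns j >= 1 as in the paper\<close>
definition cvars :: "nat \<Rightarrow> (nat \<times> nat) set" where
  "cvars n = {(i, j). i < n \<and> 1 \<le> j}"

definition Pc :: "nat \<Rightarrow> 'k::field cpoly set" where
  "Pc n = {p. \<forall>m\<in>Poly_Mapping.keys p. Poly_Mapping.keys m \<subseteq> cvars n}"

definition var :: "nat \<Rightarrow> nat \<Rightarrow> 'k::field cpoly" where
  "var i j = Poly_Mapping.single (Poly_Mapping.single (i, j) 1) 1"

definition mdeg :: "pmon \<Rightarrow> nat" where
  "mdeg m = (\<Sum>v\<in>Poly_Mapping.keys m. Poly_Mapping.lookup m v)"

definition hcP :: "nat \<Rightarrow> 'k::field cpoly \<Rightarrow> 'k cpoly" where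
  "hcP d p = (\<Sum>m\<in>{m\<in>Poly_Mapping.keys p. mdeg m = d}. Poly_Mapping.single m (Poly_Mapping.lookup p m))"

definition sigma_m :: "pmon \<Rightarrow> pmon" where
  "sigma_m m = (\<Sum>v\<in>Poly_Mapping.keys m. Poly_Mapping.single (fst v, snd v + 1) (Poly_Mapping.lookup m v))"

definition sigma :: "'k::field cpoly \<Rightarrow> 'k cpoly" where
  "sigma p = (\<Sum>m\<in>Poly_Mapping.keys p. Poly_Mapping.single (sigma_m m) (Poly_Mapping.lookup p m))"

definition iota_m :: "nat list \<Rightarrow> pmon" where
  "iota_m w = (\<Sum>k<length w. Poly_Mapping.single (w ! k, k + 1) 1)"

definition iota :: "'k::field ncpoly \<Rightarrow> 'k cpoly" where
  "iota f = (\<Sum>w\<in>Poly_Mapping.keys f. Poly_Mapping.single (iota_m w) (Poly_Mapping.lookup f w))"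

inductive_set cideal :: "nat \<Rightarrow> 'k::field cpoly set \<Rightarrow> 'k cpoly set"
  for n :: nat and G :: "'k cpoly set" where
  cideal_zero: "0 \<in> cideal n G"
| cideal_gen: "g \<in> G \<Longrightarrow> g \<in> cideal n G"
| cideal_add: "a \<in> cideal n G \<Longrightarrow> b \<in> cideal n G \<Longrightarrow> a + b \<in> cideal n G"
| cideal_mul: "p \<in> Pc n \<Longrightarrow> a \<in> cideal n G \<Longrightarrow> p * a \<in> cideal n G"

text \<open>Q is generated by the x_ij x_kj; J is the ideal of R = P/Q generated by the
sigma^k(iota(I)).  Its preimage JP in P is the ideal of P generated by both sets,
and S = R/J = P/JP.\<close>
definition JP :: "nat \<Rightarrow> 'k::field ncpoly set \<Rightarrow> 'k cpoly set" where
  "JP n I = cideal n ({var i j * var k j | i k j. i < n \<and> k < n \<and> 1 \<le> j}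
                     \<union> (\<Union>k. (sigma ^^ k) ` iota ` I))"

text \<open>preimage in P of S(delta,d): polynomials in the x_ij, delta<j<=d, plus JP\<close>
definition Pdd :: "nat \<Rightarrow> nat \<Rightarrow> nat \<Rightarrow> 'k::field cpoly set" where
  "Pdd n \<delta> d = {p \<in> Pc n. \<forall>m\<in>Poly_Mapping.keys p. \<forall>v\<in>Poly_Mapping.keys m. \<delta> < snd v \<and> snd v \<le> d}"

definition Spre :: "nat \<Rightarrow> 'k::field ncpoly set \<Rightarrow> nat \<Rightarrow> nat \<Rightarrow> 'k cpoly set" where
  "Spre n I \<delta> d = {p + q | p q. p \<in> Pdd n \<delta> d \<and> q \<in> JP n I}"

section \<open>Free graded S-modules, encoded by preimages in (+)_{i<r} P[-delta_i]\<close>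

definition cfree :: "nat \<Rightarrow> nat \<Rightarrow> (nat \<Rightarrow> 'k::field cpoly) set" where
  "cfree n r = {x. (\<forall>i<r. x i \<in> Pc n) \<and> (\<forall>i\<ge>r. x i = 0)}"

definition Jfree :: "nat \<Rightarrow> 'k::field ncpoly set \<Rightarrow> nat \<Rightarrow> (nat \<Rightarrow> 'k cpoly) set" where
  "Jfree n I r = {x. (\<forall>i<r. x i \<in> JP n I) \<and> (\<forall>i\<ge>r. x i = 0)}"

definition hcPM :: "(nat \<Rightarrow> nat) \<Rightarrow> nat \<Rightarrow> (nat \<Rightarrow> 'k::field cpoly) \<Rightarrow> nat \<Rightarrow> 'k cpoly" where
  "hcPM \<delta> d x = (\<lambda>i. if \<delta> i \<le> d then hcP (d - \<delta> i) (x i) else 0)"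

inductive_set cspan :: "nat \<Rightarrow> (nat \<Rightarrow> 'k::field cpoly) set \<Rightarrow> (nat \<Rightarrow> 'k cpoly) set"
  for n :: nat and G :: "(nat \<Rightarrow> 'k cpoly) set" where
  cspan_zero: "(\<lambda>i. 0) \<in> cspan n G"
| cspan_gen: "x \<in> G \<Longrightarrow> x \<in> cspan n G"
| cspan_add: "x \<in> cspan n G \<Longrightarrow> y \<in> cspan n G \<Longrightarrow> (\<lambda>i. x i + y i) \<in> cspan n G"
| cspan_mul: "p \<in> Pc n \<Longrightarrow> x \<in> cspan n G \<Longrightarrow> (\<lambda>i. p * x i) \<in> cspan n G"

definition graded_S_submodule ::
  "nat \<Rightarrow> 'k::field ncpoly set \<Rightarrow> nat \<Rightarrow> (nat \<Rightarrow> nat) \<Rightarrow> (nat \<Rightarrow> 'k cpoly) set \<Rightarrow> bool" where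
  "graded_S_submodule n I r \<delta> M' \<longleftrightarrow>
     M' \<subseteq> cfree n r \<and> Jfree n I r \<subseteq> M' \<and>
     (\<forall>x\<in>M'. \<forall>y\<in>M'. (\<lambda>i. x i + y i) \<in> M') \<and>
     (\<forall>x\<in>M'. \<forall>p\<in>Pc n. (\<lambda>i. p * x i) \<in> M') \<and>
     (\<forall>x\<in>M'. \<forall>d. hcPM \<delta> d x \<in> M')"

text \<open>(preimage of) M'(d)_d: elements of M' whose class lies in
(+)_i S(delta_i,d)[-delta_i] and is homogeneous of degree d\<close>
definition Mdd :: "nat \<Rightarrow> 'k::field ncpoly set \<Rightarrow> nat \<Rightarrow> (nat \<Rightarrow> nat) \<Rightarrow>
    (nat \<Rightarrow> 'k cpoly) set \<Rightarrow> nat \<Rightarrow> (nat \<Rightarrow> 'k cpoly) set" where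
  "Mdd n I r \<delta> M' d = {x \<in> M'. (\<forall>i<r. x i \<in> Spre n I (\<delta> i) d) \<and>
                                (\<forall>i<r. x i - hcPM \<delta> d x i \<in> JP n I)}"

definition iotaM :: "(nat \<Rightarrow> nat) \<Rightarrow> (nat \<Rightarrow> 'k::field ncpoly) \<Rightarrow> nat \<Rightarrow> 'k cpoly" where
  "iotaM \<delta> x = (\<lambda>i. (sigma ^^ \<delta> i) (iota (x i)))"

text \<open>(preimage of) L(M): S-submodule generated by iota(M)\<close>
definition Lmod :: "nat \<Rightarrow> 'k::field ncpoly set \<Rightarrow> nat \<Rightarrow> (nat \<Rightarrow> nat) \<Rightarrow>
    (nat \<Rightarrow> 'k ncpoly) set \<Rightarrow> (nat \<Rightarrow> 'k cpoly) set" where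
  "Lmod n I r \<delta> M = cspan n (iotaM \<delta> ` M \<union> Jfree n I r)"

end

theory Submission
  imports Defs
begin

text \<open>
  Existence: take M = \<iota>^{-1}(M'), so that L(M) \<subseteq> M'. Conversely let x \<in> M'(d)_d have
  components in S(\<delta>,d). A monomial of degree d - \<delta> in the variables x_{ij}, \<delta> < j \<le> d, is
  either a shifted word x_{w_1,\<delta>+1} \<cdots> x_{w_e,d} = \<sigma>^\<delta>(\<iota>(w)) or it repeats a column and lies
  in J. Hence x \<equiv> \<iota>(y) mod J, where y collects the coefficients of the shifted words; then
  \<iota>(y) \<in> M', so y \<in> M and x \<in> L(M).

  Uniqueness: extracting the coefficients of the shifted words \<sigma>^\<delta>(\<iota>(w)) is a linear map
  \<pi>_\<delta> : P \<rightarrow> F (shifted_coeffs) with \<pi>_\<delta>(\<sigma>^\<delta>(\<iota>(f))) = f, \<pi>_\<delta>(q \<sigma>^\<delta>(\<iota>(f))) = f \<pi>_{\<delta>+e}(q)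
  for f homogeneous of degree e, and \<pi>_\<delta>(q J) \<subseteq> I. Applied componentwise (coeffsM) it maps
  L(M) into M, so M = \<iota>^{-1}(L(M)) is determined by L(M).
\<close>

lemma poly_mapping_add_single_induct [case_names zero add]:
  assumes "P 0"
    and "\<And>q a c. a \<notin> Poly_Mapping.keys q \<Longrightarrow> c \<noteq> 0 \<Longrightarrow> P q \<Longrightarrow> P (Poly_Mapping.single a c + q)"
  shows "P p"
proof (induction p rule: Poly_Mapping.update_induct)
  case const then show ?case using assms(1) by simp
next
  case (update f a b)
  have "Poly_Mapping.update a b f = Poly_Mapping.single a b + f"
    using update.hyps(1)
    by (intro poly_mapping_eqI) (auto simp: Poly_Mapping.lookup_update lookup_add lookup_single when_def in_keys_iff)
  then show ?case using assms(2)[OF update.hyps(1,2) update.IH] by simp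
qed

lemma keys_single_add:
  "a \<notin> Poly_Mapping.keys q \<Longrightarrow> c \<noteq> 0
    \<Longrightarrow> Poly_Mapping.keys (Poly_Mapping.single a c + q) = insert a (Poly_Mapping.keys q)"
  by (auto simp: in_keys_iff lookup_add lookup_single when_def split: if_splits)

definition lin_ext :: "('a \<Rightarrow> 'b::monoid_add \<Rightarrow> 'c::comm_monoid_add) \<Rightarrow> ('a \<Rightarrow>\<^sub>0 'b) \<Rightarrow> 'c" where
  "lin_ext G p = (\<Sum>a\<in>Poly_Mapping.keys p. G a (Poly_Mapping.lookup p a))"

lemma lin_ext_add:
  assumes "\<And>a. G a 0 = 0" and "\<And>a x y. G a (x + y) = G a x + G a y"
  shows "lin_ext G (p + q) = lin_ext G p + lin_ext G q"
  unfolding lin_ext_def by (rule setsum_keys_plus_distrib) (use assms in auto)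

lemma lin_ext_single:
  assumes "G a 0 = 0" shows "lin_ext G (Poly_Mapping.single a c) = G a c"
  using assms unfolding lin_ext_def by auto

lemma lin_ext_zero [simp]: "lin_ext G 0 = 0"
  unfolding lin_ext_def by simp

lemma keys_lin_ext_single:
  "Poly_Mapping.keys (lin_ext (\<lambda>x c. Poly_Mapping.single (\<phi> x) (H x c)) p) \<subseteq> \<phi> ` Poly_Mapping.keys p"
  unfolding lin_ext_def using keys_sum[of "\<lambda>x. Poly_Mapping.single (\<phi> x) (H x (Poly_Mapping.lookup p x))" "Poly_Mapping.keys p"]
  by (auto split: if_splits)

lemma hcF_lin_ext:
  "hcF d f = lin_ext (\<lambda>w c. if length w = d then Poly_Mapping.single w c else 0) f"
  unfolding hcF_def lin_ext_def by (simp add: sum.inter_filter)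

lemma hcF_add: "hcF d (f + g) = hcF d f + hcF d g"
  unfolding hcF_lin_ext by (rule lin_ext_add) (auto simp: single_add)

lemma hcF_single:
  "hcF d (Poly_Mapping.single w c) = (if length w = d then Poly_Mapping.single w c else 0)"
  unfolding hcF_lin_ext by (rule lin_ext_single) simp

lemma hcF_zero [simp]: "hcF d 0 = 0"
  unfolding hcF_lin_ext by simp

lemma lookup_hcF:
  "Poly_Mapping.lookup (hcF d f) w = (if length w = d then Poly_Mapping.lookup f w else 0)"
proof (induction f rule: poly_mapping_add_single_induct)
  case zero then show ?case by simp
next
  case (add q a c) then show ?case by (auto simp: hcF_add hcF_single lookup_add lookup_single when_def)
qed

lemma keys_hcF: "Poly_Mapping.keys (hcF d f) = {w \<in> Poly_Mapping.keys f. length w = d}"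
  by (auto simp: in_keys_iff lookup_hcF split: if_splits)

lemma hcP_lin_ext:
  "hcP d p = lin_ext (\<lambda>m c. if mdeg m = d then Poly_Mapping.single m c else 0) p"
  unfolding hcP_def lin_ext_def by (simp add: sum.inter_filter)

lemma hcP_add: "hcP d (p + q) = hcP d p + hcP d q"
  unfolding hcP_lin_ext by (rule lin_ext_add) (auto simp: single_add)

lemma hcP_single:
  "hcP d (Poly_Mapping.single m c) = (if mdeg m = d then Poly_Mapping.single m c else 0)"
  unfolding hcP_lin_ext by (rule lin_ext_single) simp

lemma hcP_zero [simp]: "hcP d 0 = 0"
  unfolding hcP_lin_ext by simp

lemma lookup_hcP:
  "Poly_Mapping.lookup (hcP d p) m = (if mdeg m = d then Poly_Mapping.lookup p m else 0)"
proof (induction p rule: poly_mapping_add_single_induct)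
  case zero then show ?case by simp
next
  case (add q a c) then show ?case by (auto simp: hcP_add hcP_single lookup_add lookup_single when_def)
qed

lemma keys_hcP: "Poly_Mapping.keys (hcP d p) = {m \<in> Poly_Mapping.keys p. mdeg m = d}"
  by (auto simp: in_keys_iff lookup_hcP split: if_splits)

lemma mdeg_lin_ext: "mdeg m = lin_ext (\<lambda>v c. c) m"
  unfolding mdeg_def lin_ext_def by simp

lemma mdeg_add: "mdeg (m1 + m2) = mdeg m1 + mdeg m2"
  unfolding mdeg_lin_ext by (rule lin_ext_add) auto

lemma mdeg_single: "mdeg (Poly_Mapping.single v c) = c"
  unfolding mdeg_lin_ext by (rule lin_ext_single) simp

lemma mdeg_zero [simp]: "mdeg 0 = 0"
  unfolding mdeg_lin_ext by simp

lemma mdeg_sum: "mdeg (sum f A) = (\<Sum>a\<in>A. mdeg (f a))"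
  by (induction A rule: infinite_finite_induct) (auto simp: mdeg_add)

lemma sigma_m_lin_ext:
  "sigma_m m = lin_ext (\<lambda>v c. Poly_Mapping.single (fst v, snd v + 1) c) m"
  unfolding sigma_m_def lin_ext_def by simp

lemma sigma_m_add: "sigma_m (m1 + m2) = sigma_m m1 + sigma_m m2"
  unfolding sigma_m_lin_ext by (rule lin_ext_add) (auto simp: single_add)

lemma sigma_m_single: "sigma_m (Poly_Mapping.single v c) = Poly_Mapping.single (fst v, snd v + 1) c"
  unfolding sigma_m_lin_ext by (rule lin_ext_single) simp

lemma sigma_m_zero [simp]: "sigma_m 0 = 0"
  unfolding sigma_m_lin_ext by simp

lemma sigma_m_sum: "sigma_m (sum f A) = (\<Sum>a\<in>A. sigma_m (f a))"
  by (induction A rule: infinite_finite_induct) (auto simp: sigma_m_add)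

lemma sigma_lin_ext: "sigma p = lin_ext (\<lambda>m c. Poly_Mapping.single (sigma_m m) c) p"
  unfolding sigma_def lin_ext_def by simp

lemma sigma_add: "sigma (p + q) = sigma p + sigma q"
  unfolding sigma_lin_ext by (rule lin_ext_add) (auto simp: single_add)

lemma sigma_single: "sigma (Poly_Mapping.single m c) = Poly_Mapping.single (sigma_m m) c"
  unfolding sigma_lin_ext by (rule lin_ext_single) simp

lemma sigma_zero [simp]: "sigma 0 = 0"
  unfolding sigma_lin_ext by simp

lemma sigma_pow_add: "(sigma ^^ k) (p + q) = (sigma ^^ k) p + (sigma ^^ k) q"
  by (induction k) (auto simp: sigma_add)

lemma sigma_pow_zero [simp]: "(sigma ^^ k) 0 = 0"
  by (induction k) auto

lemma iota_lin_ext: "iota f = lin_ext (\<lambda>w c. Poly_Mapping.single (iota_m w) c) f"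
  unfolding iota_def lin_ext_def by simp

lemma iota_add: "iota (f + g) = iota f + iota g"
  unfolding iota_lin_ext by (rule lin_ext_add) (auto simp: single_add)

lemma iota_single: "iota (Poly_Mapping.single w c) = Poly_Mapping.single (iota_m w) c"
  unfolding iota_lin_ext by (rule lin_ext_single) simp

lemma iota_zero [simp]: "iota 0 = 0"
  unfolding iota_lin_ext by simp

definition shifted_monom :: "nat \<Rightarrow> nat list \<Rightarrow> pmon" where
  "shifted_monom k w = (\<Sum>j<length w. Poly_Mapping.single (w ! j, k + j + 1) 1)"

lemma iota_m_eq_shifted_monom: "iota_m w = shifted_monom 0 w"
  unfolding iota_m_def shifted_monom_def by simp

lemma sigma_m_shifted_monom: "sigma_m (shifted_monom k w) = shifted_monom (Suc k) w"
  unfolding shifted_monom_def by (simp add: sigma_m_sum sigma_m_single)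

definition shifted_iota :: "nat \<Rightarrow> 'k::field ncpoly \<Rightarrow> 'k cpoly" where
  "shifted_iota k f = lin_ext (\<lambda>w c. Poly_Mapping.single (shifted_monom k w) c) f"

lemma shifted_iota_add: "shifted_iota k (f + g) = shifted_iota k f + shifted_iota k g"
  unfolding shifted_iota_def by (rule lin_ext_add) (auto simp: single_add)

lemma shifted_iota_single:
  "shifted_iota k (Poly_Mapping.single w c) = Poly_Mapping.single (shifted_monom k w) c"
  unfolding shifted_iota_def by (rule lin_ext_single) simp

lemma shifted_iota_zero [simp]: "shifted_iota k 0 = 0"
  unfolding shifted_iota_def by simp

lemma shifted_iota_diff: "shifted_iota k (f - g) = shifted_iota k f - shifted_iota k g"
  using shifted_iota_add[of k "f - g" g] by (simp add: algebra_simps)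

lemma shifted_iota_sum: "shifted_iota k (sum f A) = (\<Sum>a\<in>A. shifted_iota k (f a))"
  by (induction A rule: infinite_finite_induct) (auto simp: shifted_iota_add)

lemma sigma_pow_single_shifted_monom:
  "(sigma ^^ k) (Poly_Mapping.single (shifted_monom 0 w) c)
    = Poly_Mapping.single (shifted_monom k w) c"
  by (induction k) (auto simp: sigma_single sigma_m_shifted_monom)

lemma sigma_pow_iota: "(sigma ^^ k) (iota f) = shifted_iota k f"
proof (induction f rule: poly_mapping_add_single_induct)
  case zero then show ?case by simp
next
  case (add q a c) then show ?case
    by (simp add: iota_add sigma_pow_add shifted_iota_add iota_single iota_m_eq_shifted_monom
        sigma_pow_single_shifted_monom shifted_iota_single)
qed

lemma lookup_shifted_monom: "Poly_Mapping.lookup (shifted_monom k w) (a, j) =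
   (if k < j \<and> j \<le> k + length w \<and> w ! (j - k - 1) = a then 1 else 0)"
proof -
  have "Poly_Mapping.lookup (shifted_monom k w) (a, j) =
     (\<Sum>i\<in>{..<length w}. if i = j - k - 1 then (if k < j \<and> w ! (j - k - 1) = a then 1 else 0) else 0)"
    unfolding shifted_monom_def lookup_sum
  proof (rule sum.cong)
    fix i assume "i \<in> {..<length w}"
    show "Poly_Mapping.lookup (Poly_Mapping.single (w ! i, k + i + 1) 1) (a, j) =
      (if i = j - k - 1 then (if k < j \<and> w ! (j - k - 1) = a then 1 else 0) else 0)"
      unfolding lookup_single when_def by (cases "i = j - k - 1") auto
  qed simp
  also have "\<dots> = (if k < j \<and> j \<le> k + length w \<and> w ! (j - k - 1) = a then 1 else 0)"
    proof (subst sum.delta)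
    have "k < j \<Longrightarrow> (j - k - 1 < length w) = (j \<le> k + length w)" by arith
    then show "(if j - k - 1 \<in> {..<length w} then if k < j \<and> w ! (j - k - 1) = a then 1 else 0 else 0) =
      (if k < j \<and> j \<le> k + length w \<and> w ! (j - k - 1) = a then 1 else 0)"
      by (cases "k < j") (simp_all only: lessThan_iff if_False if_True simp_thms, auto)
  qed simp
  finally show ?thesis .
qed

lemma keys_shifted_monom:
  "Poly_Mapping.keys (shifted_monom k w) = {(w ! j, k + j + 1) | j. j < length w}"
  by (auto simp: in_keys_iff split_paired_all lookup_shifted_monom split: if_splits)

lemma mdeg_shifted_monom: "mdeg (shifted_monom k w) = length w"
  unfolding shifted_monom_def by (simp add: mdeg_sum mdeg_single)

lemma shifted_monom_Nil [simp]: "shifted_monom k [] = 0"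
  unfolding shifted_monom_def by simp

lemma shifted_monom_append:
  "shifted_monom k (u @ v) = shifted_monom k u + shifted_monom (k + length u) v"
proof (rule poly_mapping_eqI)
  fix x :: "nat \<times> nat"
  obtain a j where x: "x = (a, j)" by (cases x)
  show "Poly_Mapping.lookup (shifted_monom k (u @ v)) x = Poly_Mapping.lookup (shifted_monom k u + shifted_monom (k + length u) v) x"
    unfolding x lookup_add lookup_shifted_monom by (auto simp: nth_append)
qed

lemma shifted_monom_inj: "shifted_monom k u = shifted_monom k v \<Longrightarrow> u = v"
proof -
  assume eq: "shifted_monom k u = shifted_monom k v"
  then have len: "length u = length v" using mdeg_shifted_monom by metis
  show "u = v"
  proof (rule nth_equalityI)
    show "length u = length v" by fact
  next
    fix j assume j: "j < length u"
    have "Poly_Mapping.lookup (shifted_monom k u) (u ! j, k + j + 1) = 1" using j by (simp add: lookup_shifted_monom)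
    then have "Poly_Mapping.lookup (shifted_monom k v) (u ! j, k + j + 1) = 1" using eq by simp
    then show "u ! j = v ! j" by (simp add: lookup_shifted_monom split: if_splits)
  qed
qed

lemma inj_shifted_monom: "inj (shifted_monom k)"
  by (auto intro: injI shifted_monom_inj)

lemma shifted_monom_add_eqD:
  assumes eq: "m + shifted_monom k w = shifted_monom d u" and j: "j < length w"
  shows "d < k + j + 1 \<and> k + j + 1 \<le> d + length u \<and> u ! (k + j - d) = w ! j"
proof -
  have "Poly_Mapping.lookup (shifted_monom d u) (w ! j, k + j + 1) \<ge> 1"
    using j unfolding eq[symmetric] lookup_add by (simp add: lookup_shifted_monom)
  then show ?thesis by (simp add: lookup_shifted_monom split: if_splits)
qed

lemma shifted_monom_add_eq_split:
  assumes eq: "m + shifted_monom k w = shifted_monom d u" and w: "w \<noteq> []"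
  shows "d \<le> k \<and> (\<exists>a b. length a = k - d \<and> u = a @ w @ b
    \<and> m = shifted_monom d a + shifted_monom (k + length w) b)"
proof -
  have h0: "d \<le> k" using shifted_monom_add_eqD[OF eq, of 0] w by auto
  have h1: "k + length w \<le> d + length u" using shifted_monom_add_eqD[OF eq, of "length w - 1"] w by auto
  define a where "a = take (k - d) u"
  define b where "b = drop (k - d + length w) u"
  have tw: "take (length w) (drop (k - d) u) = w"
  proof (rule nth_equalityI)
    show "length (take (length w) (drop (k - d) u)) = length w" using h0 h1 by simp
  next
    fix j assume "j < length (take (length w) (drop (k - d) u))"
    then have j: "j < length w" by simp
    show "take (length w) (drop (k - d) u) ! j = w ! j"
      using shifted_monom_add_eqD[OF eq j] j h0 h1 by (simp add: add.commute)
  qed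
  have u: "u = a @ w @ b"
  proof -
    have "u = take (k - d) u @ take (length w) (drop (k - d) u) @ drop (length w) (drop (k - d) u)"
      by (simp only: append_take_drop_id)
    then show ?thesis unfolding a_def b_def tw by (simp add: add.commute)
  qed
  have la: "length a = k - d" unfolding a_def using h0 h1 by simp
  have "shifted_monom d u = shifted_monom d a + shifted_monom k w + shifted_monom (k + length w) b"
    unfolding u shifted_monom_append la using h0 by (simp add: add.assoc)
  then have "m + shifted_monom k w = (shifted_monom d a + shifted_monom (k + length w) b) + shifted_monom k w"
    using eq by (simp add: algebra_simps)
  then have "m = shifted_monom d a + shifted_monom (k + length w) b" by simp
  then show ?thesis using h0 la u by blast
qed

lemma shifted_monom_add_eq_prefix:
  assumes eq: "m + shifted_monom d w = shifted_monom d u"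
  shows "\<exists>b. u = w @ b \<and> m = shifted_monom (d + length w) b"
proof (cases "w = []")
  case True then show ?thesis using eq by simp
next
  case False
  from shifted_monom_add_eq_split[OF eq False] show ?thesis by auto
qed

definition shifted_coeffs :: "nat \<Rightarrow> 'k::field cpoly \<Rightarrow> 'k ncpoly" where
  "shifted_coeffs d p = Abs_poly_mapping (\<lambda>u. Poly_Mapping.lookup p (shifted_monom d u))"

lemma lookup_shifted_coeffs:
  "Poly_Mapping.lookup (shifted_coeffs d p) u = Poly_Mapping.lookup p (shifted_monom d u)"
proof -
  have "{u. Poly_Mapping.lookup p (shifted_monom d u) \<noteq> 0} = shifted_monom d -` Poly_Mapping.keys p"
    by (auto simp: in_keys_iff)
  then have "finite {u. Poly_Mapping.lookup p (shifted_monom d u) \<noteq> 0}"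
    using finite_vimageI[OF finite_keys inj_shifted_monom] by simp
  then show ?thesis unfolding shifted_coeffs_def by simp
qed

lemma shifted_coeffs_eq_0I:
  "(\<And>u. shifted_monom d u \<notin> Poly_Mapping.keys p) \<Longrightarrow> shifted_coeffs d p = 0"
  by (rule poly_mapping_eqI) (simp add: lookup_shifted_coeffs in_keys_iff)

lemma shifted_coeffs_add: "shifted_coeffs d (p + q) = shifted_coeffs d p + shifted_coeffs d q"
  by (rule poly_mapping_eqI) (simp add: lookup_shifted_coeffs lookup_add)

lemma shifted_coeffs_zero [simp]: "shifted_coeffs d 0 = 0"
  by (rule poly_mapping_eqI) (simp add: lookup_shifted_coeffs)

lemma shifted_coeffs_diff: "shifted_coeffs d (p - q) = shifted_coeffs d p - shifted_coeffs d q"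
  by (rule poly_mapping_eqI) (simp add: lookup_shifted_coeffs lookup_minus)

lemma shifted_coeffs_sum: "shifted_coeffs d (sum f A) = (\<Sum>a\<in>A. shifted_coeffs d (f a))"
  by (induction A rule: infinite_finite_induct) (auto simp: shifted_coeffs_add)

lemma shifted_coeffs_single_shifted_monom:
  "shifted_coeffs d (Poly_Mapping.single (shifted_monom d u) c) = Poly_Mapping.single u c"
  by (rule poly_mapping_eqI) (auto simp: lookup_shifted_coeffs lookup_single when_def dest: shifted_monom_inj)

lemma shifted_coeffs_single_not_shifted:
  "(\<And>u. m \<noteq> shifted_monom d u)
    \<Longrightarrow> shifted_coeffs d (Poly_Mapping.single m c) = 0"
  by (rule poly_mapping_eqI) (auto simp: lookup_shifted_coeffs lookup_single when_def)

lemma lookup_shifted_iota_shifted_monom: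
  "Poly_Mapping.lookup (shifted_iota d f) (shifted_monom d u) = Poly_Mapping.lookup f u"
proof (induction f rule: poly_mapping_add_single_induct)
  case zero then show ?case by simp
next
  case (add q a c) then show ?case
    by (auto simp: shifted_iota_add shifted_iota_single lookup_add lookup_single when_def dest: shifted_monom_inj)
qed

lemma shifted_coeffs_shifted_iota: "shifted_coeffs d (shifted_iota d f) = f"
  by (rule poly_mapping_eqI) (simp add: lookup_shifted_coeffs lookup_shifted_iota_shifted_monom)

lemma keys_shifted_iota:
  "Poly_Mapping.keys (shifted_iota k f) \<subseteq> shifted_monom k ` Poly_Mapping.keys f"
  unfolding shifted_iota_def by (rule keys_lin_ext_single)

lemma keys_shifted_monom_subset_cvars_iff:
  "Poly_Mapping.keys (shifted_monom k w) \<subseteq> cvars n \<longleftrightarrow> set w \<subseteq> {..<n}"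
proof
  assume ks: "Poly_Mapping.keys (shifted_monom k w) \<subseteq> cvars n"
  show "set w \<subseteq> {..<n}"
  proof
    fix x assume "x \<in> set w"
    then obtain j where "j < length w" "w ! j = x" by (auto simp: in_set_conv_nth)
    then have "(x, k + j + 1) \<in> Poly_Mapping.keys (shifted_monom k w)" by (auto simp: keys_shifted_monom)
    then show "x \<in> {..<n}" using ks by (auto simp: cvars_def)
  qed
next
  assume "set w \<subseteq> {..<n}"
  then show "Poly_Mapping.keys (shifted_monom k w) \<subseteq> cvars n"
    by (auto simp: keys_shifted_monom cvars_def) (meson lessThan_iff nth_mem subsetD)
qed

lemma shifted_iota_Pc: "f \<in> ncF n \<Longrightarrow> shifted_iota k f \<in> Pc n"
  using keys_shifted_iota[of k f] keys_shifted_monom_subset_cvars_iff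
  unfolding Pc_def ncF_def by blast

lemma shifted_coeffs_Pc:
  assumes "p \<in> Pc n" shows "shifted_coeffs d p \<in> ncF n"
  unfolding ncF_def
proof (intro CollectI ballI)
  fix u assume "u \<in> Poly_Mapping.keys (shifted_coeffs d p)"
  then have "shifted_monom d u \<in> Poly_Mapping.keys p" by (simp add: in_keys_iff lookup_shifted_coeffs)
  then show "set u \<subseteq> {..<n}"
    using assms keys_shifted_monom_subset_cvars_iff[of d u n] unfolding Pc_def by blast
qed

lemma keys_add_nat:
  "Poly_Mapping.keys ((m1::'a \<Rightarrow>\<^sub>0 nat) + m2)
    = Poly_Mapping.keys m1 \<union> Poly_Mapping.keys m2"
  by (auto simp: in_keys_iff lookup_add)

lemma Pc_mult: "p \<in> Pc n \<Longrightarrow> q \<in> Pc n \<Longrightarrow> p * q \<in> Pc n"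
proof -
  assume p: "p \<in> Pc n" and q: "q \<in> Pc n"
  show ?thesis unfolding Pc_def
  proof (intro CollectI ballI)
    fix m assume "m \<in> Poly_Mapping.keys (p * q)"
    then obtain a b where "m = a + b" "a \<in> Poly_Mapping.keys p" "b \<in> Poly_Mapping.keys q"
      using keys_mult[of p q] by blast
    then show "Poly_Mapping.keys m \<subseteq> cvars n" using p q unfolding Pc_def by (auto simp: keys_add_nat)
  qed
qed

lemma Pc_one: "1 \<in> Pc n"
  unfolding Pc_def by simp

lemma Pc_single:
  "Poly_Mapping.keys m \<subseteq> cvars n \<Longrightarrow> Poly_Mapping.single m c \<in> Pc n"
  unfolding Pc_def by simp

lemma Pc_uminus: "p \<in> Pc n \<Longrightarrow> - p \<in> Pc n"
  unfolding Pc_def by simp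

lemma Pc_hcP: "p \<in> Pc n \<Longrightarrow> hcP d p \<in> Pc n"
  unfolding Pc_def by (auto simp: keys_hcP)

lemma ncmul_lin_ext:
  "ncmul f g
    = lin_ext (\<lambda>u c. lin_ext (\<lambda>v e. Poly_Mapping.single (u @ v) (c * e)) g) f"
  unfolding ncmul_def lin_ext_def by simp

lemma ncmul_add_left: "ncmul (f1 + f2) g = ncmul f1 g + ncmul f2 g"
  unfolding ncmul_lin_ext
  by (rule lin_ext_add) (auto simp: lin_ext_def single_add distrib_right sum.distrib)

lemma ncmul_add_right: "ncmul f (g1 + g2) = ncmul f g1 + ncmul f g2"
  unfolding ncmul_lin_ext lin_ext_def[of _ f]
  by (simp add: lin_ext_add single_add distrib_left sum.distrib)

lemma ncmul_zero_left [simp]: "ncmul 0 g = 0"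
  unfolding ncmul_def by simp

lemma ncmul_zero_right [simp]: "ncmul f 0 = 0"
  unfolding ncmul_def by simp

lemma ncmul_single_single:
  "ncmul (Poly_Mapping.single u c) (Poly_Mapping.single v e) = Poly_Mapping.single (u @ v) (c * e)"
  unfolding ncmul_lin_ext by (simp add: lin_ext_single)

lemma ncmul_sum_left: "ncmul (sum f A) g = (\<Sum>a\<in>A. ncmul (f a) g)"
  by (induction A rule: infinite_finite_induct) (auto simp: ncmul_add_left)

lemma ncmul_one_left: "ncmul (Poly_Mapping.single [] 1) g = g"
proof (induction g rule: poly_mapping_add_single_induct)
  case zero then show ?case by simp
next
  case (add q a c) then show ?case by (simp add: ncmul_add_right ncmul_single_single)
qed

lemma keys_ncmul:
  "Poly_Mapping.keys (ncmul f g) \<subseteq> {u @ v | u v. u \<in> Poly_Mapping.keys f \<and> v \<in> Poly_Mapping.keys g}"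
proof -
  have "Poly_Mapping.keys (ncmul f g) \<subseteq> (\<Union>u\<in>Poly_Mapping.keys f. Poly_Mapping.keys
      (\<Sum>v\<in>Poly_Mapping.keys g. Poly_Mapping.single (u @ v) (Poly_Mapping.lookup f u * Poly_Mapping.lookup g v)))"
    unfolding ncmul_def by (rule keys_sum)
  also have "\<dots> \<subseteq> (\<Union>u\<in>Poly_Mapping.keys f. \<Union>v\<in>Poly_Mapping.keys g. Poly_Mapping.keys
      (Poly_Mapping.single (u @ v) (Poly_Mapping.lookup f u * Poly_Mapping.lookup g v)))"
    by (intro UN_mono order.refl keys_sum)
  also have "\<dots> \<subseteq> {u @ v | u v. u \<in> Poly_Mapping.keys f \<and> v \<in> Poly_Mapping.keys g}"
    by (auto split: if_splits)
  finally show ?thesis .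
qed

lemma ncF_ncmul: assumes "f \<in> ncF n" "g \<in> ncF n" shows "ncmul f g \<in> ncF n"
  unfolding ncF_def
proof (intro CollectI ballI)
  fix x assume "x \<in> Poly_Mapping.keys (ncmul f g)"
  then obtain u v where "x = u @ v" "u \<in> Poly_Mapping.keys f" "v \<in> Poly_Mapping.keys g"
    using keys_ncmul[of f g] by blast
  then show "set x \<subseteq> {..<n}" using assms unfolding ncF_def by auto
qed

lemma ncF_add: "f \<in> ncF n \<Longrightarrow> g \<in> ncF n \<Longrightarrow> f + g \<in> ncF n"
  unfolding ncF_def using keys_add[of f g] by blast

lemma ncF_hcF: "f \<in> ncF n \<Longrightarrow> hcF d f \<in> ncF n"
  unfolding ncF_def by (auto simp: keys_hcF)

lemma ncF_single: "set w \<subseteq> {..<n} \<Longrightarrow> Poly_Mapping.single w c \<in> ncF n"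
  unfolding ncF_def by simp

lemma shifted_iota_ncmul_single:
  "shifted_iota d (ncmul (Poly_Mapping.single a c) g)
    = Poly_Mapping.single (shifted_monom d a) c * shifted_iota (d + length a) g"
proof (induction g rule: poly_mapping_add_single_induct)
  case zero then show ?case by simp
next
  case (add q b e) then show ?case
    by (simp add: ncmul_add_right shifted_iota_add distrib_left ncmul_single_single shifted_iota_single mult_single shifted_monom_append)
qed

lemma shifted_iota_ncmul_hom:
  "(\<forall>w\<in>Poly_Mapping.keys y. length w = L)
    \<Longrightarrow> shifted_iota d (ncmul y g) = shifted_iota d y * shifted_iota (d + L) g"
proof (induction y rule: poly_mapping_add_single_induct)
  case zero then show ?case by simp
next
  case (add q a c)
  then have "length a = L" "\<forall>w\<in>Poly_Mapping.keys q. length w = L" by (auto simp: keys_single_add)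
  with add show ?case
    by (simp add: ncmul_add_left shifted_iota_add distrib_right shifted_iota_ncmul_single shifted_iota_single)
qed

lemma shifted_coeffs_mult_single:
  "shifted_coeffs d (q * Poly_Mapping.single (shifted_monom d a) c)
    = ncmul (Poly_Mapping.single a c) (shifted_coeffs (d + length a) q)"
proof (induction q rule: poly_mapping_add_single_induct)
  case zero then show ?case by simp
next
  case (add q m e)
  have "shifted_coeffs d (Poly_Mapping.single m e * Poly_Mapping.single (shifted_monom d a) c) =
        ncmul (Poly_Mapping.single a c) (shifted_coeffs (d + length a) (Poly_Mapping.single m e))"
  proof (cases "\<exists>b. m = shifted_monom (d + length a) b")
    case True
    then obtain b where b: "m = shifted_monom (d + length a) b" by blast
    have e: "m + shifted_monom d a = shifted_monom d (a @ b)" by (simp add: b shifted_monom_append add.commute)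
    show ?thesis
      unfolding mult_single e by (simp add: b shifted_coeffs_single_shifted_monom ncmul_single_single mult.commute)
  next
    case False
    have "\<And>u. m + shifted_monom d a \<noteq> shifted_monom d u" using shifted_monom_add_eq_prefix False by blast
    then show ?thesis using False by (simp add: mult_single shifted_coeffs_single_not_shifted)
  qed
  with add show ?case by (simp add: distrib_right shifted_coeffs_add ncmul_add_right)
qed

lemma shifted_coeffs_mult_shifted_iota_hom:
  "(\<forall>w\<in>Poly_Mapping.keys y. length w + d = s)
    \<Longrightarrow> shifted_coeffs d (q * shifted_iota d y) = ncmul y (shifted_coeffs s q)"
proof (induction y rule: poly_mapping_add_single_induct)
  case zero then show ?case by simp
next
  case (add y a c)
  then have "length a + d = s" "\<forall>w\<in>Poly_Mapping.keys y. length w + d = s" by (auto simp: keys_single_add)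
  with add show ?case
    by (simp add: ncmul_add_left shifted_iota_add distrib_left shifted_coeffs_add shifted_iota_single shifted_coeffs_mult_single add.commute)
qed

lemma hcP_mult_single_single:
  "hcP d (Poly_Mapping.single m1 c1 * Poly_Mapping.single m2 c2) =
     (\<Sum>e\<in>{..d}. hcP e (Poly_Mapping.single m1 c1) * hcP (d - e) (Poly_Mapping.single m2 c2))"
proof -
  have "(\<Sum>e\<in>{..d}. hcP e (Poly_Mapping.single m1 c1) * hcP (d - e) (Poly_Mapping.single m2 c2)) =
        (\<Sum>e\<in>{..d}. if e = mdeg m1 then (if mdeg m2 = d - mdeg m1 then Poly_Mapping.single (m1 + m2) (c1 * c2) else 0) else 0)"
    by (rule sum.cong) (auto simp: hcP_single mult_single)
  also have "\<dots> = (if mdeg m1 \<le> d \<and> mdeg m2 = d - mdeg m1 then Poly_Mapping.single (m1 + m2) (c1 * c2) else 0)"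
    by (subst sum.delta) auto
  also have "\<dots> = hcP d (Poly_Mapping.single m1 c1 * Poly_Mapping.single m2 c2)"
    by (auto simp: mult_single hcP_single mdeg_add)
  finally show ?thesis by simp
qed

lemma hcP_mult: "hcP d (p * q) = (\<Sum>e\<in>{..d}. hcP e p * hcP (d - e) q)"
proof (induction p rule: poly_mapping_add_single_induct)
  case zero then show ?case by simp
next
  case (add p m1 c1)
  have "hcP d (Poly_Mapping.single m1 c1 * q) = (\<Sum>e\<in>{..d}. hcP e (Poly_Mapping.single m1 c1) * hcP (d - e) q)"
  proof (induction q rule: poly_mapping_add_single_induct)
    case zero then show ?case by simp
  next
    case (add q m2 c2)
    then show ?case by (simp add: distrib_left hcP_add hcP_mult_single_single sum.distrib)
  qed
  with add show ?case by (simp add: distrib_right hcP_add sum.distrib)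
qed

lemma hcP_shifted_iota: "hcP e (shifted_iota k f) = shifted_iota k (hcF e f)"
proof (induction f rule: poly_mapping_add_single_induct)
  case zero then show ?case by simp
next
  case (add f w c) then show ?case
    by (simp add: shifted_iota_add hcP_add hcF_add shifted_iota_single hcP_single hcF_single mdeg_shifted_monom)
qed

lemma sum_hcF:
  assumes "\<forall>w\<in>Poly_Mapping.keys f. length w \<le> N"
  shows "(\<Sum>e\<in>{..N}. hcF e f) = f"
proof (rule poly_mapping_eqI)
  fix w
  have "Poly_Mapping.lookup (\<Sum>e\<in>{..N}. hcF e f) w = (\<Sum>e\<in>{..N}. if e = length w then Poly_Mapping.lookup f w else 0)"
    unfolding lookup_sum by (rule sum.cong) (auto simp: lookup_hcF)
  also have "\<dots> = Poly_Mapping.lookup f w"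
    using assms by (subst sum.delta) (auto simp: in_keys_iff)
  finally show "Poly_Mapping.lookup (\<Sum>e\<in>{..N}. hcF e f) w = Poly_Mapping.lookup f w" .
qed

lemma cideal_sum:
  "(\<And>a. a \<in> A \<Longrightarrow> f a \<in> cideal n G)
    \<Longrightarrow> sum f A \<in> cideal n G"
  by (induction A rule: infinite_finite_induct) (auto intro: cideal.intros)

lemma cideal_uminus: "a \<in> cideal n G \<Longrightarrow> - a \<in> cideal n G"
  using cideal_mul[OF Pc_uminus[OF Pc_one], of a n G] by simp

lemma cideal_diff:
  "a \<in> cideal n G \<Longrightarrow> b \<in> cideal n G \<Longrightarrow> a - b \<in> cideal n G"
  using cideal_add[OF _ cideal_uminus] by (metis diff_conv_add_uminus)

lemma JP_shifted_iota: assumes "f \<in> I" shows "shifted_iota k f \<in> JP n I"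
proof -
  have "(sigma ^^ k) (iota f) \<in> JP n I" unfolding JP_def by (rule cideal_gen) (use assms in blast)
  then show ?thesis by (simp add: sigma_pow_iota)
qed

lemma JP_var_mult_var:
  "i < n \<Longrightarrow> k < n \<Longrightarrow> 1 \<le> j
    \<Longrightarrow> var i j * var k j \<in> JP n I"
  unfolding JP_def by (rule cideal_gen) blast

lemma JP_zero: "0 \<in> JP n I"
  unfolding JP_def by (rule cideal_zero)

lemma JP_add: "a \<in> JP n I \<Longrightarrow> b \<in> JP n I \<Longrightarrow> a + b \<in> JP n I"
  unfolding JP_def by (rule cideal_add)

lemma JP_mul: "p \<in> Pc n \<Longrightarrow> a \<in> JP n I \<Longrightarrow> p * a \<in> JP n I"
  unfolding JP_def by (rule cideal_mul)

lemma JP_diff: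
  "a \<in> JP n I \<Longrightarrow> b \<in> JP n I \<Longrightarrow> a - b \<in> JP n I"
  unfolding JP_def by (rule cideal_diff)

lemma JP_diff_swap: "a - b \<in> JP n I \<Longrightarrow> b - a \<in> JP n I"
  using cideal_uminus[of "a - b"] unfolding JP_def by simp

lemma var_mult:
  "var i j * var k j
    = Poly_Mapping.single (Poly_Mapping.single (i, j) 1 + Poly_Mapping.single (k, j) 1) 1"
  unfolding var_def by (simp add: mult_single)

lemma JP_sum:
  "(\<And>a. a \<in> A \<Longrightarrow> f a \<in> JP n I) \<Longrightarrow> sum f A \<in> JP n I"
  unfolding JP_def by (rule cideal_sum)

lemma JP_induct [consumes 1, case_names zero var_var shifted_iota add mul]:
  assumes "a \<in> JP n I"
    and "P 0"
    and "\<And>i k j. i < n \<Longrightarrow> k < n \<Longrightarrow> 1 \<le> j \<Longrightarrow> P (var i j * var k j)"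
    and "\<And>k f. f \<in> I \<Longrightarrow> P (shifted_iota k f)"
    and "\<And>a b. a \<in> JP n I \<Longrightarrow> b \<in> JP n I \<Longrightarrow> P a \<Longrightarrow> P b \<Longrightarrow> P (a + b)"
    and "\<And>p a. p \<in> Pc n \<Longrightarrow> a \<in> JP n I \<Longrightarrow> P a \<Longrightarrow> P (p * a)"
  shows "P a"
  using assms(1) unfolding JP_def
proof (induction rule: cideal.induct)
  case (cideal_gen g)
  then show ?case using assms(3,4) by (auto simp: sigma_pow_iota)
qed (use assms(2,5,6) in \<open>auto simp: JP_def\<close>)

lemma JP_hcP:
  assumes gI: "graded_tsideal n I" and "a \<in> JP n I"
  shows "hcP d a \<in> JP n I"
  using assms(2)
proof (induction arbitrary: d rule: JP_induct)
  case zero then show ?case by (simp add: JP_zero)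
next
  case (var_var i k j)
  then have "var i j * var k j \<in> JP n I" by (rule JP_var_mult_var)
  moreover have "hcP d (var i j * var k j) = var i j * var k j \<or> hcP d (var i j * var k j) = 0"
    by (simp add: var_mult hcP_single)
  ultimately show ?case using JP_zero by metis
next
  case (shifted_iota k f)
  then have "hcF d f \<in> I" using gI unfolding graded_tsideal_def by blast
  then show ?case by (simp add: hcP_shifted_iota JP_shifted_iota)
next
  case (add a b) then show ?case by (simp add: hcP_add JP_add)
next
  case (mul p a) then show ?case unfolding hcP_mult by (intro JP_sum) (simp add: JP_mul Pc_hcP)
qed

lemma shifted_iota_deg0:
  "\<forall>w\<in>Poly_Mapping.keys f. length w = 0
    \<Longrightarrow> shifted_iota k f = shifted_iota d f"
proof (induction f rule: poly_mapping_add_single_induct)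
  case zero then show ?case by simp
next
  case (add q a c) then show ?case by (auto simp: keys_single_add shifted_iota_add shifted_iota_single)
qed

lemma shifted_coeffs_single_mult_shifted_iota:
  assumes hom: "\<forall>w\<in>Poly_Mapping.keys f. length w = L" and "length a = k - d" and "d \<le> k"
  shows "shifted_coeffs d (Poly_Mapping.single (shifted_monom d a + shifted_monom (k + L) b) c * shifted_iota k f)
    = ncmul (Poly_Mapping.single a 1) (ncmul f (Poly_Mapping.single b c))"
proof -
  have "Poly_Mapping.single (shifted_monom d a + shifted_monom (k + L) b) c * shifted_iota k f
      = shifted_iota k f * shifted_iota (k + L) (Poly_Mapping.single b c) * shifted_iota d (Poly_Mapping.single a 1)"
    by (simp add: shifted_iota_single mult_single ac_simps)
  also have "\<dots> = shifted_iota k (ncmul f (Poly_Mapping.single b c)) * shifted_iota d (Poly_Mapping.single a 1)"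
    using shifted_iota_ncmul_hom[OF hom, of k "Poly_Mapping.single b c"] by simp
  finally have eq: "Poly_Mapping.single (shifted_monom d a + shifted_monom (k + L) b) c * shifted_iota k f
      = shifted_iota k (ncmul f (Poly_Mapping.single b c)) * shifted_iota d (Poly_Mapping.single a 1)" .
  have "shifted_coeffs d (shifted_iota k (ncmul f (Poly_Mapping.single b c)) * shifted_iota d (Poly_Mapping.single a 1))
      = ncmul (Poly_Mapping.single a 1) (shifted_coeffs k (shifted_iota k (ncmul f (Poly_Mapping.single b c))))"
    by (rule shifted_coeffs_mult_shifted_iota_hom) (use assms(2,3) in simp)
  then show ?thesis by (simp add: eq shifted_coeffs_shifted_iota)
qed

lemma shifted_coeffs_single_mult_shifted_iota_eq_0:
  assumes hom: "\<forall>w\<in>Poly_Mapping.keys f. length w = L" and "L > 0"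
    and no_split: "\<nexists>a b. d \<le> k \<and> length a = k - d \<and> m = shifted_monom d a + shifted_monom (k + L) b"
  shows "shifted_coeffs d (Poly_Mapping.single m c * shifted_iota k f) = 0"
proof (rule shifted_coeffs_eq_0I)
  fix u
  show "shifted_monom d u \<notin> Poly_Mapping.keys (Poly_Mapping.single m c * shifted_iota k f)"
  proof
    assume "shifted_monom d u \<in> Poly_Mapping.keys (Poly_Mapping.single m c * shifted_iota k f)"
    then obtain x y where "shifted_monom d u = x + y" "x \<in> Poly_Mapping.keys (Poly_Mapping.single m c)"
        "y \<in> Poly_Mapping.keys (shifted_iota k f)"
      using keys_mult by blast
    then obtain w where w: "w \<in> Poly_Mapping.keys f" "m + shifted_monom k w = shifted_monom d u"
      using keys_shifted_iota by (fastforce split: if_splits)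
    then have "w \<noteq> []" using hom \<open>L > 0\<close> by auto
    from shifted_monom_add_eq_split[OF w(2) this] show False
      using no_split hom w(1) by auto
  qed
qed

context
  fixes n :: nat and I :: "'k::field ncpoly set"
  assumes gI: "graded_tsideal n I"
begin

lemma I_zero: "0 \<in> I" using gI unfolding graded_tsideal_def by blast
lemma I_add: "f \<in> I \<Longrightarrow> g \<in> I \<Longrightarrow> f + g \<in> I" using gI unfolding graded_tsideal_def by blast
lemma I_ncF: "f \<in> I \<Longrightarrow> f \<in> ncF n" using gI unfolding graded_tsideal_def by blast
lemma I_ideal:
  "f \<in> I \<Longrightarrow> a \<in> ncF n \<Longrightarrow> b \<in> ncF n
    \<Longrightarrow> ncmul a (ncmul f b) \<in> I"
  using gI unfolding graded_tsideal_def by blast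
lemma I_hcF: "f \<in> I \<Longrightarrow> hcF d f \<in> I" using gI unfolding graded_tsideal_def by blast
lemma I_sum: "(\<And>a. a \<in> A \<Longrightarrow> h a \<in> I) \<Longrightarrow> sum h A \<in> I"
  by (induction A rule: infinite_finite_induct) (auto intro: I_zero I_add)

lemma shifted_coeffs_mult_in_I:
  assumes "q \<in> Pc n"
    and single: "\<And>m c. Poly_Mapping.keys m \<subseteq> cvars n \<Longrightarrow> shifted_coeffs d (Poly_Mapping.single m c * a) \<in> I"
  shows "shifted_coeffs d (q * a) \<in> I"
  using assms(1)
proof (induction q rule: poly_mapping_add_single_induct)
  case zero then show ?case by (simp add: I_zero)
next
  case (add q m c)
  then have "q \<in> Pc n" and "Poly_Mapping.keys m \<subseteq> cvars n"
    unfolding Pc_def by (simp_all add: keys_single_add)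
  with add.IH single show ?case by (simp add: distrib_right shifted_coeffs_add I_add)
qed

lemma shifted_coeffs_mult_shifted_iota_hom_in_I:
  assumes f: "f \<in> I" and hom: "\<forall>w\<in>Poly_Mapping.keys f. length w = L" and "L > 0" and "q \<in> Pc n"
  shows "shifted_coeffs d (q * shifted_iota k f) \<in> I"
  using \<open>q \<in> Pc n\<close>
proof (rule shifted_coeffs_mult_in_I)
  fix m :: pmon and c assume mP: "Poly_Mapping.keys m \<subseteq> cvars n"
  show "shifted_coeffs d (Poly_Mapping.single m c * shifted_iota k f) \<in> I"
  proof (cases "\<exists>a b. d \<le> k \<and> length a = k - d \<and> m = shifted_monom d a + shifted_monom (k + L) b")
    case True
    then obtain a b where ab: "d \<le> k" "length a = k - d" "m = shifted_monom d a + shifted_monom (k + L) b"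
      by blast
    have "set a \<subseteq> {..<n}" "set b \<subseteq> {..<n}"
      using mP keys_shifted_monom_subset_cvars_iff[of d a n] keys_shifted_monom_subset_cvars_iff[of "k + L" b n]
      unfolding ab(3) keys_add_nat by auto
    then show ?thesis
      unfolding ab(3) shifted_coeffs_single_mult_shifted_iota[OF hom ab(2,1)]
      by (intro I_ideal[OF f]) (auto intro: ncF_single)
  next
    case False
    then show ?thesis using shifted_coeffs_single_mult_shifted_iota_eq_0[OF hom \<open>L > 0\<close>] by (simp add: I_zero)
  qed
qed

lemma shifted_coeffs_mult_shifted_iota_deg0_in_I:
  assumes f: "f \<in> I" and hom: "\<forall>w\<in>Poly_Mapping.keys f. length w = 0" and q: "q \<in> Pc n"
  shows "shifted_coeffs d (q * shifted_iota k f) \<in> I"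
proof -
  have "shifted_coeffs d (q * shifted_iota k f) = ncmul f (shifted_coeffs d q)"
    using shifted_iota_deg0[OF hom, of k d] shifted_coeffs_mult_shifted_iota_hom[of f d d q] hom by simp
  also have "\<dots> = ncmul (Poly_Mapping.single [] 1) (ncmul f (shifted_coeffs d q))" by (simp add: ncmul_one_left)
  finally show ?thesis using I_ideal[OF f, of "Poly_Mapping.single [] 1" "shifted_coeffs d q"] shifted_coeffs_Pc[OF q]
    by (simp add: ncF_single)
qed

lemma shifted_coeffs_mult_shifted_iota_in_I:
  assumes f: "f \<in> I" and q: "q \<in> Pc n"
  shows "shifted_coeffs d (q * shifted_iota k f) \<in> I"
proof -
  define N where "N = Max (insert 0 (length ` Poly_Mapping.keys f))"
  have "\<forall>w\<in>Poly_Mapping.keys f. length w \<le> N" unfolding N_def by (auto intro: Max_ge)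
  then have "f = (\<Sum>L\<in>{..N}. hcF L f)" using sum_hcF by metis
  then have "shifted_coeffs d (q * shifted_iota k f) = (\<Sum>L\<in>{..N}. shifted_coeffs d (q * shifted_iota k (hcF L f)))"
    by (metis shifted_iota_sum shifted_coeffs_sum sum_distrib_left)
  also have "\<dots> \<in> I"
  proof (rule I_sum)
    fix L
    have hf: "hcF L f \<in> I" using I_hcF[OF f] .
    have hom: "\<forall>w\<in>Poly_Mapping.keys (hcF L f). length w = L" by (simp add: keys_hcF)
    show "shifted_coeffs d (q * shifted_iota k (hcF L f)) \<in> I"
    proof (cases "L = 0")
      case True then show ?thesis using shifted_coeffs_mult_shifted_iota_deg0_in_I[OF hf _ q] hom by simp
    next
      case False then show ?thesis using shifted_coeffs_mult_shifted_iota_hom_in_I[OF hf hom _ q] by simp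
    qed
  qed
  finally show ?thesis .
qed

text \<open>A shifted monomial uses every column at most once.\<close>

lemma shifted_coeffs_mult_var_mult_var: "shifted_coeffs d (q * (var i j * var k j)) = 0"
proof (rule shifted_coeffs_eq_0I)
  fix u
  show "shifted_monom d u \<notin> Poly_Mapping.keys (q * (var i j * var k j))"
  proof
    assume "shifted_monom d u \<in> Poly_Mapping.keys (q * (var i j * var k j))"
    then obtain x where "shifted_monom d u = x + (Poly_Mapping.single (i, j) 1 + Poly_Mapping.single (k, j) 1)"
      using keys_mult[of q "var i j * var k j"] by (auto simp: var_mult split: if_splits)
    then have "Poly_Mapping.lookup (shifted_monom d u) (i, j) \<ge> 1 + (if i = k then 1 else 0)"
      and "Poly_Mapping.lookup (shifted_monom d u) (k, j) \<ge> 1"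
      by (simp_all add: lookup_add lookup_single when_def)
    then show False by (cases "i = k") (simp_all add: lookup_shifted_monom split: if_splits)
  qed
qed

lemma shifted_coeffs_mult_JP_in_I:
  assumes "a \<in> JP n I" and "q \<in> Pc n"
  shows "shifted_coeffs d (q * a) \<in> I"
  using assms
proof (induction arbitrary: q d rule: JP_induct)
  case zero then show ?case by (simp add: I_zero)
next
  case var_var then show ?case by (simp add: shifted_coeffs_mult_var_mult_var I_zero)
next
  case shifted_iota then show ?case by (simp add: shifted_coeffs_mult_shifted_iota_in_I)
next
  case add then show ?case by (simp add: distrib_left shifted_coeffs_add I_add)
next
  case (mul p a)
  then have "shifted_coeffs d ((q * p) * a) \<in> I" by (simp add: Pc_mult)
  then show ?case by (simp add: mult.assoc)
qed

end

lemma monom_mult_var_var_in_JP: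
  assumes "Poly_Mapping.keys (m + Poly_Mapping.single v 1 + Poly_Mapping.single v' 1) \<subseteq> cvars n"
    and "snd v = snd v'"
  shows "Poly_Mapping.single (m + Poly_Mapping.single v 1 + Poly_Mapping.single v' 1) c \<in> JP n I"
proof -
  obtain a a' j where v: "v = (a, j)" "v' = (a', j)" using assms(2) by (cases v, cases v') auto
  have "a < n" "a' < n" "1 \<le> j" "Poly_Mapping.keys m \<subseteq> cvars n"
    using assms(1) unfolding v by (auto simp: keys_add_nat cvars_def)
  moreover have "Poly_Mapping.single (m + Poly_Mapping.single v 1 + Poly_Mapping.single v' 1) c
      = Poly_Mapping.single m c * (var a j * var a' j)"
    unfolding v by (simp add: var_mult mult_single add.assoc)
  ultimately show ?thesis by (simp add: JP_mul Pc_single JP_var_mult_var)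
qed

lemma monom_eq_shifted_monomI:
  assumes one: "\<forall>v\<in>Poly_Mapping.keys m. Poly_Mapping.lookup m v = 1"
    and inj: "inj_on snd (Poly_Mapping.keys m)"
    and col: "\<forall>v\<in>Poly_Mapping.keys m. d < snd v \<and> snd v \<le> D"
    and deg: "mdeg m = D - d"
  shows "\<exists>u. m = shifted_monom d u"
proof -
  have "card (Poly_Mapping.keys m) = D - d" using deg one by (simp add: mdeg_def)
  then have "card (snd ` Poly_Mapping.keys m) = card {d<..D}" by (simp add: card_image[OF inj])
  then have img: "snd ` Poly_Mapping.keys m = {d<..D}" using col by (intro card_subset_eq) auto
  define var_in_col where "var_in_col j = (THE v. v \<in> Poly_Mapping.keys m \<and> snd v = j)" for j
  have var_in_col: "var_in_col (snd v) = v" if "v \<in> Poly_Mapping.keys m" for v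
    unfolding var_in_col_def using that inj by (intro the_equality) (auto dest: inj_onD)
  define u where "u = map (\<lambda>i. fst (var_in_col (d + i + 1))) [0..<D - d]"
  have u_nth: "u ! (j - d - 1) = fst (var_in_col j)" if "d < j" "j \<le> D" for j
  proof -
    have "j - d - 1 < D - d" "d + (j - d - 1) + 1 = j" using that by auto
    then show ?thesis unfolding u_def by simp
  qed
  have len: "length u = D - d" unfolding u_def by simp
  have "Poly_Mapping.lookup m (a, j) = Poly_Mapping.lookup (shifted_monom d u) (a, j)" for a j
  proof (cases "d < j \<and> j \<le> D")
    case True
    then have "j \<in> snd ` Poly_Mapping.keys m" using img by simp
    then obtain v where v: "v \<in> Poly_Mapping.keys m" "snd v = j" by blast
    then have "u ! (j - d - 1) = fst v" using True u_nth[of j] var_in_col[OF v(1)] v(2) by simp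
    moreover have "Poly_Mapping.lookup m (a, j) = (if a = fst v then 1 else 0)"
    proof (cases "a = fst v")
      case True
      then have "(a, j) = v" using v(2) by auto
      then show ?thesis using one v(1) True by simp
    next
      case False
      then have "(a, j) \<notin> Poly_Mapping.keys m" using v inj_onD[OF inj, of "(a, j)" v] by (cases v) auto
      then show ?thesis using False by (simp add: in_keys_iff)
    qed
    ultimately show ?thesis using True len by (auto simp: lookup_shifted_monom)
  next
    case False
    then have "(a, j) \<notin> Poly_Mapping.keys m" using col by auto
    then show ?thesis using False len by (auto simp: lookup_shifted_monom in_keys_iff)
  qed
  then have "m = shifted_monom d u" by (intro poly_mapping_eqI) (simp add: split_paired_all)
  then show ?thesis ..
qed

text \<open>Pigeonhole: a monomial of degree D - d in the columns d < j \<le> D that is not a shifted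
  word repeats a column, so it is divisible by some x_{ij} x_{kj}.\<close>

lemma monom_in_JP_if_not_shifted:
  assumes mc: "Poly_Mapping.keys m \<subseteq> cvars n"
    and col: "\<forall>v\<in>Poly_Mapping.keys m. d < snd v \<and> snd v \<le> D"
    and deg: "mdeg m = D - d"
    and not_shifted: "\<forall>u. m \<noteq> shifted_monom d u"
  shows "Poly_Mapping.single m c \<in> JP n I"
proof (rule ccontr)
  assume "Poly_Mapping.single m c \<notin> JP n I"
  then have no_repeat: "m \<noteq> m' + Poly_Mapping.single v 1 + Poly_Mapping.single v' 1" if "snd v = snd v'" for m' v v'
    using monom_mult_var_var_in_JP[OF _ that] mc by blast
  have "\<forall>v\<in>Poly_Mapping.keys m. Poly_Mapping.lookup m v = 1"
  proof
    fix v assume v: "v \<in> Poly_Mapping.keys m"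
    show "Poly_Mapping.lookup m v = 1"
    proof (rule ccontr)
      assume "Poly_Mapping.lookup m v \<noteq> 1"
      with v have "m = (m - (Poly_Mapping.single v 1 + Poly_Mapping.single v 1)) + Poly_Mapping.single v 1 + Poly_Mapping.single v 1"
        by (intro poly_mapping_eqI) (auto simp: in_keys_iff lookup_add lookup_minus lookup_single when_def)
      with no_repeat show False by blast
    qed
  qed
  moreover have "inj_on snd (Poly_Mapping.keys m)"
  proof (rule inj_onI, rule ccontr)
    fix v v' assume vv': "v \<in> Poly_Mapping.keys m" "v' \<in> Poly_Mapping.keys m" "snd v = snd v'" "v \<noteq> v'"
    then have "m = (m - (Poly_Mapping.single v 1 + Poly_Mapping.single v' 1)) + Poly_Mapping.single v 1 + Poly_Mapping.single v' 1"
      by (intro poly_mapping_eqI) (auto simp: in_keys_iff lookup_add lookup_minus lookup_single when_def)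
    with no_repeat vv'(3) show False by blast
  qed
  ultimately show False using monom_eq_shifted_monomI col deg not_shifted by blast
qed

lemma JP_diff_shifted_iota_shifted_coeffs:
  assumes "p \<in> Pc n"
    and "\<forall>m\<in>Poly_Mapping.keys p. (\<forall>v\<in>Poly_Mapping.keys m. d < snd v \<and> snd v \<le> D) \<and> mdeg m = D - d"
  shows "p - shifted_iota d (shifted_coeffs d p) \<in> JP n I"
  using assms
proof (induction p rule: poly_mapping_add_single_induct)
  case zero then show ?case by (simp add: JP_zero)
next
  case (add q m c)
  then have "q \<in> Pc n" and mP: "Poly_Mapping.keys m \<subseteq> cvars n"
    and "\<forall>m\<in>Poly_Mapping.keys q. (\<forall>v\<in>Poly_Mapping.keys m. d < snd v \<and> snd v \<le> D) \<and> mdeg m = D - d"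
    and hm: "(\<forall>v\<in>Poly_Mapping.keys m. d < snd v \<and> snd v \<le> D) \<and> mdeg m = D - d"
    by (simp_all add: Pc_def keys_single_add)
  with add.IH have "q - shifted_iota d (shifted_coeffs d q) \<in> JP n I" by blast
  moreover have "Poly_Mapping.single m c - shifted_iota d (shifted_coeffs d (Poly_Mapping.single m c)) \<in> JP n I"
  proof (cases "\<exists>u. m = shifted_monom d u")
    case True
    then show ?thesis by (auto simp: shifted_coeffs_single_shifted_monom shifted_iota_single JP_zero)
  next
    case False
    then show ?thesis
      using monom_in_JP_if_not_shifted[OF mP _ _, of d D c I] hm by (simp add: shifted_coeffs_single_not_shifted)
  qed
  ultimately show ?case using JP_add by (fastforce simp: shifted_coeffs_add shifted_iota_add algebra_simps)
qed

lemma iotaM_shifted_iota: "iotaM \<delta> x = (\<lambda>i. shifted_iota (\<delta> i) (x i))"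
  by (simp add: iotaM_def sigma_pow_iota)

lemma length_keys_hcFM:
  "w \<in> Poly_Mapping.keys (hcFM \<delta> s x i) \<Longrightarrow> length w + \<delta> i = s"
  by (auto simp: hcFM_def keys_hcF split: if_splits)

lemma lookup_hcFM:
  "Poly_Mapping.lookup (hcFM \<delta> s x i) w
    = (if \<delta> i + length w = s then Poly_Mapping.lookup (x i) w else 0)"
  by (auto simp: hcFM_def lookup_hcF)

lemma hcFM_zero: "x i = 0 \<Longrightarrow> hcFM \<delta> s x i = 0"
  by (simp add: hcFM_def)

lemma sum_hcFM:
  assumes x0: "\<forall>i\<ge>r. x i = 0"
  shows "\<exists>S. \<forall>i. x i = (\<Sum>s\<in>{..S}. hcFM \<delta> s x i)"
proof -
  define T where "T = (\<Union>i\<in>{..<r}. (\<lambda>w. \<delta> i + length w) ` Poly_Mapping.keys (x i))"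
  have finT: "finite T" unfolding T_def by auto
  define S where "S = Max (insert 0 T)"
  have bound: "i < r \<Longrightarrow> w \<in> Poly_Mapping.keys (x i) \<Longrightarrow> \<delta> i + length w \<le> S" for i w
    unfolding S_def T_def using finT T_def by (intro Max_ge) auto
  have "x i = (\<Sum>s\<in>{..S}. hcFM \<delta> s x i)" for i
  proof (cases "i < r")
    case False
    then show ?thesis using x0 by (simp add: hcFM_zero)
  next
    case True
    show ?thesis
    proof (rule poly_mapping_eqI)
      fix w
      have "Poly_Mapping.lookup (\<Sum>s\<in>{..S}. hcFM \<delta> s x i) w =
          (\<Sum>s\<in>{..S}. if s = \<delta> i + length w then Poly_Mapping.lookup (x i) w else 0)"
        unfolding lookup_sum by (rule sum.cong) (auto simp: lookup_hcFM)
      also have "\<dots> = Poly_Mapping.lookup (x i) w"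
        using bound[OF True, of w] by (subst sum.delta) (auto simp: in_keys_iff)
      finally show "Poly_Mapping.lookup (x i) w = Poly_Mapping.lookup (\<Sum>s\<in>{..S}. hcFM \<delta> s x i) w" by simp
    qed
  qed
  then show ?thesis by blast
qed

lemma iotaM_hcFM: "iotaM \<delta> (hcFM \<delta> s x) = hcPM \<delta> s (iotaM \<delta> x)"
  by (rule ext) (simp add: iotaM_shifted_iota hcFM_def hcPM_def hcP_shifted_iota)

lemma shifted_iota_ncmul_hcFM:
  "shifted_iota (\<delta> i) (ncmul (hcFM \<delta> s x i) g)
    = shifted_iota s g * shifted_iota (\<delta> i) (hcFM \<delta> s x i)"
proof (cases "\<delta> i \<le> s")
  case True
  have "\<forall>w\<in>Poly_Mapping.keys (hcFM \<delta> s x i). length w = s - \<delta> i" using length_keys_hcFM by fastforce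
  from shifted_iota_ncmul_hom[OF this, of "\<delta> i" g] True show ?thesis by (simp add: mult.commute)
next
  case False then show ?thesis by (simp add: hcFM_def)
qed

lemma pointwise_sum_closed:
  assumes zero: "(\<lambda>i. 0) \<in> M" and add: "\<And>x y. x \<in> M \<Longrightarrow> y \<in> M \<Longrightarrow> (\<lambda>i. x i + y i) \<in> M"
    and mem: "\<And>a. a \<in> A \<Longrightarrow> F a \<in> M"
  shows "(\<lambda>i. \<Sum>a\<in>A. F a i) \<in> M"
  using mem
proof (induction A rule: infinite_finite_induct)
  case (insert a A)
  then have "(\<lambda>i. F a i + (\<Sum>a\<in>A. F a i)) \<in> M" by (intro add) (auto simp del: sum.insert)
  with insert.hyps show ?case by simp
qed (simp_all add: zero)

definition coeffsM :: "nat \<Rightarrow> (nat \<Rightarrow> nat) \<Rightarrow> (nat \<Rightarrow> 'k::field cpoly) \<Rightarrow> nat \<Rightarrow> 'k ncpoly" where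
  "coeffsM r \<delta> z = (\<lambda>i. if i < r then shifted_coeffs (\<delta> i) (z i) else 0)"

lemma coeffsM_iotaM:
  "\<forall>i\<ge>r. x i = 0 \<Longrightarrow> coeffsM r \<delta> (iotaM \<delta> x) = x"
  by (auto simp: coeffsM_def iotaM_shifted_iota shifted_coeffs_shifted_iota)

lemma coeffsM_add:
  "coeffsM r \<delta> (\<lambda>i. x i + y i)
    = (\<lambda>i. coeffsM r \<delta> x i + coeffsM r \<delta> y i)"
  by (auto simp: coeffsM_def shifted_coeffs_add)

context
  fixes n :: nat and I :: "'k::field ncpoly set" and r :: nat and \<delta> :: "nat \<Rightarrow> nat"
  assumes gI: "graded_tsideal n I"
begin

lemma zero_Jfree: "(\<lambda>i. 0) \<in> Jfree n I r"
  unfolding Jfree_def by (simp add: JP_zero)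

lemma graded_right_submodule_zero:
  "graded_right_submodule n I r \<delta> M \<Longrightarrow> (\<lambda>i. 0) \<in> M"
  using I_zero[OF gI] unfolding graded_right_submodule_def Ifree_def by auto

lemma graded_right_submodule_sum:
  "graded_right_submodule n I r \<delta> M \<Longrightarrow> (\<And>a. a \<in> A \<Longrightarrow> F a \<in> M) \<Longrightarrow> (\<lambda>i. \<Sum>a\<in>A. F a i) \<in> M"
  by (rule pointwise_sum_closed)
    (auto simp: graded_right_submodule_zero, auto simp: graded_right_submodule_def)

lemma coeffsM_mult_iotaM_mem:
  assumes gM: "graded_right_submodule n I r \<delta> M" and x: "x \<in> M" and q: "q \<in> Pc n"
  shows "coeffsM r \<delta> (\<lambda>i. q * iotaM \<delta> x i) \<in> M"
proof -
  have x0: "\<forall>i\<ge>r. x i = 0" using gM x unfolding graded_right_submodule_def ncfree_def by auto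
  obtain S where S: "\<And>i. x i = (\<Sum>s\<in>{..S}. hcFM \<delta> s x i)" using sum_hcFM[OF x0] by blast
  have "coeffsM r \<delta> (\<lambda>i. q * iotaM \<delta> x i) = (\<lambda>i. \<Sum>s\<in>{..S}. ncmul (hcFM \<delta> s x i) (shifted_coeffs s q))"
  proof
    fix i
    have "shifted_coeffs (\<delta> i) (q * iotaM \<delta> x i)
        = (\<Sum>s\<in>{..S}. shifted_coeffs (\<delta> i) (q * shifted_iota (\<delta> i) (hcFM \<delta> s x i)))"
      unfolding iotaM_shifted_iota by (subst S) (simp add: shifted_iota_sum sum_distrib_left shifted_coeffs_sum)
    also have "\<dots> = (\<Sum>s\<in>{..S}. ncmul (hcFM \<delta> s x i) (shifted_coeffs s q))"
      by (intro sum.cong refl shifted_coeffs_mult_shifted_iota_hom) (use length_keys_hcFM in blast)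
    finally show "coeffsM r \<delta> (\<lambda>i. q * iotaM \<delta> x i) i = (\<Sum>s\<in>{..S}. ncmul (hcFM \<delta> s x i) (shifted_coeffs s q))"
      using x0 by (simp add: coeffsM_def hcFM_zero)
  qed
  also have "\<dots> \<in> M"
  proof (rule graded_right_submodule_sum[OF gM])
    fix s
    have "hcFM \<delta> s x \<in> M" using gM x unfolding graded_right_submodule_def by blast
    then show "(\<lambda>i. ncmul (hcFM \<delta> s x i) (shifted_coeffs s q)) \<in> M"
      using gM shifted_coeffs_Pc[OF q] unfolding graded_right_submodule_def by blast
  qed
  finally show ?thesis .
qed

lemma coeffsM_mult_Lmod_mem:
  assumes gM: "graded_right_submodule n I r \<delta> M" and "z \<in> Lmod n I r \<delta> M" and "q \<in> Pc n"
  shows "coeffsM r \<delta> (\<lambda>i. q * z i) \<in> M"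
  using assms(2,3) unfolding Lmod_def
proof (induction arbitrary: q rule: cspan.induct)
  case cspan_zero
  have "coeffsM r \<delta> (\<lambda>i. q * 0) = (\<lambda>i. 0)" by (auto simp: coeffsM_def)
  then show ?case using graded_right_submodule_zero[OF gM] by simp
next
  case (cspan_gen x)
  then consider y where "x = iotaM \<delta> y" "y \<in> M" | "x \<in> Jfree n I r" by blast
  then show ?case
  proof cases
    case 1
    then show ?thesis using coeffsM_mult_iotaM_mem[OF gM _ cspan_gen.prems] by simp
  next
    case 2
    then have "coeffsM r \<delta> (\<lambda>i. q * x i) \<in> Ifree r I"
      using shifted_coeffs_mult_JP_in_I[OF gI _ cspan_gen.prems]
      unfolding Ifree_def Jfree_def coeffsM_def by auto
    then show ?thesis using gM unfolding graded_right_submodule_def by blast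
  qed
next
  case (cspan_add x y)
  then have "(\<lambda>i. coeffsM r \<delta> (\<lambda>i. q * x i) i + coeffsM r \<delta> (\<lambda>i. q * y i) i) \<in> M"
    using gM unfolding graded_right_submodule_def by blast
  then show ?case by (simp add: distrib_left coeffsM_add)
next
  case (cspan_mul p x)
  then have "coeffsM r \<delta> (\<lambda>i. (q * p) * x i) \<in> M" by (simp add: Pc_mult)
  then show ?case by (simp add: mult.assoc)
qed

lemma Lmod_eq_imp_subset:
  assumes g1: "graded_right_submodule n I r \<delta> M1" and g2: "graded_right_submodule n I r \<delta> M2"
    and eq: "Lmod n I r \<delta> M1 = Lmod n I r \<delta> M2"
  shows "M1 \<subseteq> M2"
proof
  fix x assume x: "x \<in> M1"
  then have x0: "\<forall>i\<ge>r. x i = 0" using g1 unfolding graded_right_submodule_def ncfree_def by auto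
  from x have "iotaM \<delta> x \<in> Lmod n I r \<delta> M1" unfolding Lmod_def by (blast intro: cspan_gen)
  then have "iotaM \<delta> x \<in> Lmod n I r \<delta> M2" using eq by simp
  from coeffsM_mult_Lmod_mem[OF g2 this Pc_one] show "x \<in> M2" by (simp add: coeffsM_iotaM[OF x0])
qed

lemma hcP_Spre_congr_shifted_iota:
  assumes p: "p \<in> Spre n I e d" and "e \<le> d"
  shows "hcP (d - e) p - shifted_iota e (shifted_coeffs e (hcP (d - e) p)) \<in> JP n I"
proof -
  from p obtain a j where p_eq: "p = a + j" and a: "a \<in> Pdd n e d" and j: "j \<in> JP n I"
    unfolding Spre_def by blast
  define h where "h = hcP (d - e) a"
  have diff_JP: "hcP (d - e) p - h \<in> JP n I" unfolding h_def p_eq hcP_add using JP_hcP[OF gI j] by simp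
  have "shifted_iota e (shifted_coeffs e (hcP (d - e) p - h)) \<in> JP n I"
    using JP_shifted_iota shifted_coeffs_mult_JP_in_I[OF gI diff_JP Pc_one, of e] by simp
  moreover have "h - shifted_iota e (shifted_coeffs e h) \<in> JP n I"
    unfolding h_def using a \<open>e \<le> d\<close>
    by (intro JP_diff_shifted_iota_shifted_coeffs Pc_hcP) (auto simp: Pdd_def keys_hcP)
  ultimately show ?thesis
    using JP_add[OF JP_diff[OF diff_JP]] by (fastforce simp: shifted_coeffs_diff shifted_iota_diff algebra_simps)
qed

end

context
  fixes n :: nat and I :: "'k::field ncpoly set" and r :: nat and \<delta> :: "nat \<Rightarrow> nat"
    and M' :: "(nat \<Rightarrow> 'k cpoly) set"
  assumes gI: "graded_tsideal n I"
    and gS: "graded_S_submodule n I r \<delta> M'"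
begin

lemma M'_cfree: "z \<in> M' \<Longrightarrow> z \<in> cfree n r" using gS unfolding graded_S_submodule_def by blast
lemma M'_Jfree: "z \<in> Jfree n I r \<Longrightarrow> z \<in> M'" using gS unfolding graded_S_submodule_def by blast
lemma M'_add: "x \<in> M' \<Longrightarrow> y \<in> M' \<Longrightarrow> (\<lambda>i. x i + y i) \<in> M'" using gS unfolding graded_S_submodule_def by blast
lemma M'_mul: "x \<in> M' \<Longrightarrow> p \<in> Pc n \<Longrightarrow> (\<lambda>i. p * x i) \<in> M'" using gS unfolding graded_S_submodule_def by blast
lemma M'_hc: "x \<in> M' \<Longrightarrow> hcPM \<delta> d x \<in> M'" using gS unfolding graded_S_submodule_def by blast

definition "iota_preimage = {x \<in> ncfree n r. iotaM \<delta> x \<in> M'}"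

lemma iotaM_ncmul_mem:
  assumes x0: "\<forall>i\<ge>r. x i = 0" and xM: "iotaM \<delta> x \<in> M'" and g: "g \<in> ncF n"
  shows "iotaM \<delta> (\<lambda>i. ncmul (x i) g) \<in> M'"
proof -
  obtain S where S: "\<And>i. x i = (\<Sum>s\<in>{..S}. hcFM \<delta> s x i)" using sum_hcFM[OF x0] by blast
  have "iotaM \<delta> (\<lambda>i. ncmul (x i) g) = (\<lambda>i. \<Sum>s\<in>{..S}. shifted_iota s g * iotaM \<delta> (hcFM \<delta> s x) i)"
  proof
    fix i
    have "iotaM \<delta> (\<lambda>i. ncmul (x i) g) i = shifted_iota (\<delta> i) (ncmul (\<Sum>s\<in>{..S}. hcFM \<delta> s x i) g)"
      unfolding iotaM_shifted_iota using S[of i] by simp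
    then show "iotaM \<delta> (\<lambda>i. ncmul (x i) g) i = (\<Sum>s\<in>{..S}. shifted_iota s g * iotaM \<delta> (hcFM \<delta> s x) i)"
      by (simp add: ncmul_sum_left shifted_iota_sum shifted_iota_ncmul_hcFM iotaM_shifted_iota)
  qed
  also have "\<dots> \<in> M'"
  proof (rule pointwise_sum_closed)
    fix s
    have "iotaM \<delta> (hcFM \<delta> s x) \<in> M'" unfolding iotaM_hcFM by (rule M'_hc[OF xM])
    then show "(\<lambda>i. shifted_iota s g * iotaM \<delta> (hcFM \<delta> s x) i) \<in> M'"
      using M'_mul shifted_iota_Pc[OF g] by blast
  qed (use M'_Jfree zero_Jfree[OF gI] M'_add in blast)+
  finally show ?thesis .
qed

lemma graded_right_submodule_iota_preimage: "graded_right_submodule n I r \<delta> iota_preimage"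
  unfolding graded_right_submodule_def
proof (intro conjI ballI allI subsetI)
  show "x \<in> ncfree n r" if "x \<in> iota_preimage" for x using that unfolding iota_preimage_def by blast
next
  fix x assume x: "x \<in> Ifree r I"
  have "x \<in> ncfree n r" using x I_ncF[OF gI] unfolding Ifree_def ncfree_def by auto
  moreover have "iotaM \<delta> x \<in> Jfree n I r"
    using x unfolding Ifree_def Jfree_def iotaM_shifted_iota by (auto intro: JP_shifted_iota)
  ultimately show "x \<in> iota_preimage" unfolding iota_preimage_def using M'_Jfree by blast
next
  fix x y assume "x \<in> iota_preimage" and "y \<in> iota_preimage"
  moreover have "iotaM \<delta> (\<lambda>i. x i + y i) = (\<lambda>i. iotaM \<delta> x i + iotaM \<delta> y i)"
    by (simp add: iotaM_shifted_iota shifted_iota_add)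
  ultimately show "(\<lambda>i. x i + y i) \<in> iota_preimage"
    using M'_add unfolding iota_preimage_def ncfree_def by (auto intro: ncF_add)
next
  fix x and g :: "'k ncpoly" assume "x \<in> iota_preimage" and "g \<in> ncF n"
  then show "(\<lambda>i. ncmul (x i) g) \<in> iota_preimage"
    using iotaM_ncmul_mem unfolding iota_preimage_def ncfree_def by (auto intro: ncF_ncmul)
next
  fix x d assume x: "x \<in> iota_preimage"
  then have "iotaM \<delta> (hcFM \<delta> d x) \<in> M'" unfolding iota_preimage_def iotaM_hcFM by (blast intro: M'_hc)
  moreover have "hcFM \<delta> d x \<in> ncfree n r"
    using x unfolding iota_preimage_def ncfree_def hcFM_def by (auto intro: ncF_hcF simp: ncF_def keys_hcF)
  ultimately show "hcFM \<delta> d x \<in> iota_preimage" unfolding iota_preimage_def by blast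
qed

lemma Lmod_iota_preimage_subset: "Lmod n I r \<delta> iota_preimage \<subseteq> M'"
proof
  fix z assume "z \<in> Lmod n I r \<delta> iota_preimage"
  then show "z \<in> M'" unfolding Lmod_def
    by induction (use M'_Jfree zero_Jfree[OF gI] M'_add M'_mul in \<open>auto simp: iota_preimage_def\<close>)
qed

lemma Mdd_in_Lmod_iota_preimage:
  assumes x: "x \<in> Mdd n I r \<delta> M' d"
  shows "x \<in> Lmod n I r \<delta> iota_preimage"
proof -
  have xM: "x \<in> M'" and xS: "\<forall>i<r. x i \<in> Spre n I (\<delta> i) d" and xh: "\<forall>i<r. x i - hcPM \<delta> d x i \<in> JP n I"
    using x unfolding Mdd_def by auto
  have x0: "\<forall>i\<ge>r. x i = 0" using M'_cfree[OF xM] unfolding cfree_def by auto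
  define z where "z = hcPM \<delta> d x"
  have zM: "z \<in> M'" unfolding z_def by (rule M'_hc[OF xM])
  have z0: "\<forall>i\<ge>r. z i = 0" using x0 unfolding z_def hcPM_def by auto
  define y where "y = coeffsM r \<delta> z"
  have yf: "y \<in> ncfree n r"
    using M'_cfree[OF zM] unfolding y_def coeffsM_def ncfree_def cfree_def by (auto intro: shifted_coeffs_Pc)
  have zy: "(\<lambda>i. z i - iotaM \<delta> y i) \<in> Jfree n I r"
    using z0 hcP_Spre_congr_shifted_iota[OF gI] xS
    unfolding Jfree_def y_def z_def coeffsM_def hcPM_def iotaM_shifted_iota by (auto simp: JP_zero)
  then have "(\<lambda>i. iotaM \<delta> y i - z i) \<in> Jfree n I r" unfolding Jfree_def by (auto intro: JP_diff_swap)
  from M'_add[OF zM M'_Jfree[OF this]] have "iotaM \<delta> y \<in> M'" by simp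
  with yf have "iotaM \<delta> y \<in> Lmod n I r \<delta> iota_preimage"
    unfolding Lmod_def iota_preimage_def by (blast intro: cspan_gen)
  moreover have "(\<lambda>i. z i - iotaM \<delta> y i) \<in> Lmod n I r \<delta> iota_preimage"
    using zy unfolding Lmod_def by (blast intro: cspan_gen)
  moreover have "(\<lambda>i. x i - z i) \<in> Jfree n I r"
    using xh x0 z0 unfolding Jfree_def z_def by auto
  then have "(\<lambda>i. x i - z i) \<in> Lmod n I r \<delta> iota_preimage"
    unfolding Lmod_def by (blast intro: cspan_gen)
  ultimately have "(\<lambda>i. (iotaM \<delta> y i + (z i - iotaM \<delta> y i)) + (x i - z i)) \<in> Lmod n I r \<delta> iota_preimage"
    unfolding Lmod_def by (intro cspan_add)
  then show ?thesis by simp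
qed

lemma subset_Lmod_iota_preimage:
  assumes "M' = cspan n ((\<Union>d. Mdd n I r \<delta> M' d) \<union> Jfree n I r)"
  shows "M' \<subseteq> Lmod n I r \<delta> iota_preimage"
proof
  fix z assume "z \<in> M'"
  then have "z \<in> cspan n ((\<Union>d. Mdd n I r \<delta> M' d) \<union> Jfree n I r)" using assms by blast
  then show "z \<in> Lmod n I r \<delta> iota_preimage"
    by induction (auto simp: Lmod_def intro: cspan.intros Mdd_in_Lmod_iota_preimage[unfolded Lmod_def])
qed

end

theorem mainTheorem9:
  fixes n r :: nat and \<delta> :: "nat \<Rightarrow> nat" and I :: "'k::field ncpoly set"
    and M' :: "(nat \<Rightarrow> 'k cpoly) set"
  assumes "graded_tsideal n I"
    and "graded_S_submodule n I r \<delta> M'"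
    and "M' = cspan n ((\<Union>d. Mdd n I r \<delta> M' d) \<union> Jfree n I r)"
  shows "\<exists>!M. graded_right_submodule n I r \<delta> M \<and> M' = Lmod n I r \<delta> M"
proof
  let ?M = "iota_preimage n r \<delta> M'"
  show "graded_right_submodule n I r \<delta> ?M \<and> M' = Lmod n I r \<delta> ?M"
    using graded_right_submodule_iota_preimage[OF assms(1,2)] Lmod_iota_preimage_subset[OF assms(1,2)]
      subset_Lmod_iota_preimage[OF assms] by blast
  then show "M = ?M" if "graded_right_submodule n I r \<delta> M \<and> M' = Lmod n I r \<delta> M" for M
    using that Lmod_eq_imp_subset[OF assms(1), of r \<delta> M ?M] Lmod_eq_imp_subset[OF assms(1), of r \<delta> ?M M]
    by blast
qed

end
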